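(* Let $c\in C^\infty(\mathbb{T}^1)$ (complex-valued), $q\in\mathbb{C}$, and $L=\partial_t+c(t)\partial_x+q$ on $\mathbb{T}^1\times\mathbb{R}$. Suppose $f\in(\ker L^t)^0$. Then for every $\xi\in\mathbb{R}$ the ordinary differential equation $$\partial_tw(t)+i(\xi c(t)-iq)w(t)=\widehat f(t,\xi),\qquad t\in\mathbb{T}^1,$$ admits a solution $w\in C^\infty(\mathbb{T}^1)$.
   Context: $\mathbb{T}^1=\mathbb{R}/2\pi\mathbb{Z}$. $\mathcal{S}(\mathbb{T}^1\times\mathbb{R})$ is the space of $f\in C^\infty(\mathbb{T}^1\times\mathbb{R})$ with $\sup_{t,x}|x^\gamma\partial_t^\alpha\partial_x^\beta f(t,x)|<\infty$ for all $\alpha,\beta,\gamma\in\mathbb{N}_0$, $\mathcal{S}'(\mathbb{T}^1\times\mathbb{R})$ its dual. $\widehat f(t,\xi)=\int_{\mathbb{R}}f(t,x)e^{-ix\xi}\,dx$ is the partial Fourier transform in $x$. $L^tv=-\partial_tv-c(t)\partial_xv+qv$ is the transpose of $L$, and $(\ker L^t)^0=\{f\in\mathcal{S}(\mathbb{T}^1\times\mathbb{R}):\langle v,f\rangle=0\text{ for all }v\in\mathcal{S}'(\mathbb{T}^1\times\mathbb{R})\text{ with }L^tv=0\}$. *)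

theory Defs
  imports "HOL-Analysis.Analysis"
begin

text \<open>Functions on T^1 = R/2piZ are represented as 2pi-periodic functions on R.\<close>

definition periodic2pi :: "(real \<Rightarrow> 'a) \<Rightarrow> bool" where
  "periodic2pi w \<longleftrightarrow> (\<forall>t. w (t + 2 * pi) = w t)"

definition smooth1 :: "(real \<Rightarrow> complex) \<Rightarrow> bool" where
  "smooth1 w \<longleftrightarrow> (\<exists>D :: nat \<Rightarrow> real \<Rightarrow> complex. D 0 = w \<and>
      (\<forall>k t. (D k has_vector_derivative D (Suc k) t) (at t)))"

text \<open>D a b is the partial derivative d_t^a d_x^b f; all of them exist and are
  jointly continuous, i.e. f is C^infinity on R^2.\<close>
definition smooth_derivs2 ::
  "(real \<Rightarrow> real \<Rightarrow> complex) \<Rightarrow> (nat \<Rightarrow> nat \<Rightarrow> real \<Rightarrow> real \<Rightarrow> complex) \<Rightarrow> bool" where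
  "smooth_derivs2 f D \<longleftrightarrow> D 0 0 = f \<and>
     (\<forall>a b t x. ((\<lambda>s. D a b s x) has_vector_derivative D (Suc a) b t x) (at t) \<and>
                ((\<lambda>y. D a b t y) has_vector_derivative D a (Suc b) t x) (at x)) \<and>
     (\<forall>a b. continuous_on UNIV (\<lambda>p. D a b (fst p) (snd p)))"

definition in_schwartz :: "(real \<Rightarrow> real \<Rightarrow> complex) \<Rightarrow> bool" where
  "in_schwartz f \<longleftrightarrow> (\<forall>t x. f (t + 2 * pi) x = f t x) \<and>
     (\<exists>D. smooth_derivs2 f D \<and>
        (\<forall>a b g. \<exists>C. \<forall>t x. \<bar>x\<bar> ^ g * norm (D a b t x) \<le> C))"

text \<open>Tempered distributions S'(T^1 x R): linear functionals on S, continuous for the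
  Schwartz topology (bounded by a constant times finitely many seminorms).\<close>
definition tempered :: "((real \<Rightarrow> real \<Rightarrow> complex) \<Rightarrow> complex) \<Rightarrow> bool" where
  "tempered v \<longleftrightarrow>
     (\<forall>f g (a::complex). in_schwartz f \<longrightarrow> in_schwartz g \<longrightarrow>
        v (\<lambda>t x. a * f t x + g t x) = a * v f + v g) \<and>
     (\<exists>C N. \<forall>f D M. in_schwartz f \<longrightarrow> smooth_derivs2 f D \<longrightarrow>
        (\<forall>a\<le>N. \<forall>b\<le>N. \<forall>g\<le>N. \<forall>t x. \<bar>x\<bar> ^ g * norm (D a b t x) \<le> M) \<longrightarrow>
        norm (v f) \<le> C * M)"

definition Lop :: "(real \<Rightarrow> complex) \<Rightarrow> complex \<Rightarrow> (real \<Rightarrow> real \<Rightarrow> complex) \<Rightarrow> real \<Rightarrow> real \<Rightarrow> complex" where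
  "Lop c q \<phi> = (\<lambda>t x. vector_derivative (\<lambda>s. \<phi> s x) (at t)
                    + c t * vector_derivative (\<lambda>y. \<phi> t y) (at x) + q * \<phi> t x)"

text \<open>(ker L^t)^0. For v in S', L^t v = 0 means <L^t v, phi> = <v, L phi> = 0 for all phi in S.\<close>
definition ann_ker_Lt :: "(real \<Rightarrow> complex) \<Rightarrow> complex \<Rightarrow> (real \<Rightarrow> real \<Rightarrow> complex) set" where
  "ann_ker_Lt c q = {f. in_schwartz f \<and>
     (\<forall>v. tempered v \<longrightarrow> (\<forall>\<phi>. in_schwartz \<phi> \<longrightarrow> v (Lop c q \<phi>) = 0) \<longrightarrow> v f = 0)}"

definition fhat :: "(real \<Rightarrow> real \<Rightarrow> complex) \<Rightarrow> real \<Rightarrow> real \<Rightarrow> complex" where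
  "fhat f t \<xi> = integral\<^sup>L lborel (\<lambda>x. f t x * cis (- (x * \<xi>)))"

end

theory Submission
  imports Defs "HOL-Probability.Sinc_Integral" "HOL-Real_Asymp.Real_Asymp"
begin

text \<open>Write \<open>F t = fhat f t \<xi>\<close> and \<open>a t = i \<xi> c t + q\<close>, so that the equation reads
  \<open>w' + a w = F\<close>, and let \<open>A' = a\<close>. Variation of constants gives the smooth solutions
  \<open>w t = exp (- A t) (w0 + J t)\<close> with \<open>J t = \<integral>{0..t} exp A F\<close>, and such a solution is
  \<open>2 pi\<close>-periodic iff \<open>(exp (A (2 pi)) - 1) w0 = J (2 pi)\<close>. This can be solved for \<open>w0\<close>
  unless \<open>exp (A (2 pi)) = 1\<close>. In that resonant case \<open>v \<phi> = \<integral>{0..2 pi} exp A (fhat \<phi> \<cdot> \<xi>)\<close>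
  is a tempered distribution with \<open>v (L \<phi>) = 0\<close> for every Schwartz function \<open>\<phi>\<close>, because
  \<open>exp A (fhat (L \<phi>) \<cdot> \<xi>)\<close> is the derivative of the periodic function \<open>exp A (fhat \<phi> \<cdot> \<xi>)\<close>.
  So \<open>L\<^sup>t v = 0\<close>, and \<open>f \<in> (ker L\<^sup>t)\<^sup>0\<close> gives \<open>v f = 0\<close>, i.e. \<open>J (2 pi) = 0\<close>.\<close>

section \<open>Smooth functions of one variable\<close>

fun ktimes_differentiable :: "nat \<Rightarrow> (real \<Rightarrow> 'a::real_normed_vector) \<Rightarrow> bool" where
  "ktimes_differentiable 0 g \<longleftrightarrow> True"
| "ktimes_differentiable (Suc k) g \<longleftrightarrow>
     (\<exists>g'. (\<forall>t. (g has_vector_derivative g' t) (at t)) \<and> ktimes_differentiable k g')"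

lemma ktimes_differentiable_SucD:
  "ktimes_differentiable (Suc k) g \<Longrightarrow> ktimes_differentiable k g"
  by (induction k arbitrary: g) auto

lemma ktimes_differentiable_const: "ktimes_differentiable k (\<lambda>t. c)"
  by (induction k arbitrary: c) (auto intro!: exI[of _ "\<lambda>t. 0"])

lemma ktimes_differentiable_add:
  "ktimes_differentiable k f \<Longrightarrow> ktimes_differentiable k g \<Longrightarrow>
   ktimes_differentiable k (\<lambda>t. f t + g t)"
proof (induction k arbitrary: f g)
  case (Suc k)
  then obtain f' g' where "\<forall>t. (f has_vector_derivative f' t) (at t)" "ktimes_differentiable k f'"
    "\<forall>t. (g has_vector_derivative g' t) (at t)" "ktimes_differentiable k g'" by auto
  with Suc.IH show ?case
    by (auto intro!: exI[of _ "\<lambda>t. f' t + g' t"] has_vector_derivative_add)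
qed simp

lemma ktimes_differentiable_mult:
  fixes f g :: "real \<Rightarrow> 'a::real_normed_algebra"
  shows "ktimes_differentiable k f \<Longrightarrow> ktimes_differentiable k g \<Longrightarrow>
         ktimes_differentiable k (\<lambda>t. f t * g t)"
proof (induction k arbitrary: f g)
  case (Suc k)
  then obtain f' g' where d: "\<forall>t. (f has_vector_derivative f' t) (at t)" "ktimes_differentiable k f'"
    "\<forall>t. (g has_vector_derivative g' t) (at t)" "ktimes_differentiable k g'" by auto
  have "ktimes_differentiable k (\<lambda>t. f t * g' t + f' t * g t)"
    using Suc ktimes_differentiable_SucD ktimes_differentiable_add d by metis
  with d show ?case
    by (auto intro!: exI[of _ "\<lambda>t. f t * g' t + f' t * g t"] has_vector_derivative_mult)
qed simp

lemma has_vector_derivative_exp_compose: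
  fixes g :: "real \<Rightarrow> complex"
  assumes "(g has_vector_derivative g') (at t)"
  shows "((\<lambda>t. exp (g t)) has_vector_derivative g' * exp (g t)) (at t)"
  using field_vector_diff_chain_at[OF assms DERIV_exp] by (simp add: o_def)

lemma ktimes_differentiable_exp:
  fixes g :: "real \<Rightarrow> complex"
  shows "ktimes_differentiable k g \<Longrightarrow> ktimes_differentiable k (\<lambda>t. exp (g t))"
proof (induction k arbitrary: g)
  case (Suc k)
  then obtain g' where d: "\<forall>t. (g has_vector_derivative g' t) (at t)" "ktimes_differentiable k g'"
    by auto
  have "ktimes_differentiable k (\<lambda>t. g' t * exp (g t))"
    using Suc ktimes_differentiable_SucD ktimes_differentiable_mult d(2) by metis
  with d(1) show ?case
    by (auto intro!: exI[of _ "\<lambda>t. g' t * exp (g t)"] has_vector_derivative_exp_compose)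
qed simp

lemma ktimes_differentiable_SucE:
  assumes "ktimes_differentiable (Suc k) g"
  shows "(g has_vector_derivative vector_derivative g (at t)) (at t)"
    and "ktimes_differentiable k (\<lambda>t. vector_derivative g (at t))"
proof -
  obtain g' where g': "\<forall>t. (g has_vector_derivative g' t) (at t)" "ktimes_differentiable k g'"
    using assms by auto
  then have "(\<lambda>t. vector_derivative g (at t)) = g'"
    using vector_derivative_at by blast
  with g' show "(g has_vector_derivative vector_derivative g (at t)) (at t)"
    and "ktimes_differentiable k (\<lambda>t. vector_derivative g (at t))"
    by auto
qed

lemma smooth1_iff_ktimes_differentiable:
  "smooth1 g \<longleftrightarrow> (\<forall>k. ktimes_differentiable k g)"
proof
  assume "smooth1 g"
  then obtain D where D: "D 0 = g" "\<forall>k t. (D k has_vector_derivative D (Suc k) t) (at t)"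
    unfolding smooth1_def by blast
  have "\<forall>j. ktimes_differentiable k (D j)" for k
    by (induction k) (use D in auto)
  with D show "\<forall>k. ktimes_differentiable k g" by metis
next
  assume g: "\<forall>k. ktimes_differentiable k g"
  define D where "D n = ((\<lambda>h t. vector_derivative h (at t)) ^^ n) g" for n
  have D_smooth: "\<forall>k. ktimes_differentiable k (D n)" for n
  proof (induction n)
    case (Suc n)
    then show ?case
      using ktimes_differentiable_SucE(2) by (fastforce simp: D_def)
  qed (use g in \<open>simp add: D_def\<close>)
  have "(D k has_vector_derivative D (Suc k) t) (at t)" for k t
  proof -
    have "(D k has_vector_derivative vector_derivative (D k) (at t)) (at t)"
      using ktimes_differentiable_SucE(1) D_smooth by blast
    then show ?thesis by (simp add: D_def)
  qed
  then show "smooth1 g" unfolding smooth1_def by (auto intro!: exI[of _ D] simp: D_def)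
qed

lemma smooth1_const: "smooth1 (\<lambda>t. c)"
  by (simp add: smooth1_iff_ktimes_differentiable ktimes_differentiable_const)

lemma smooth1_add: "smooth1 f \<Longrightarrow> smooth1 g \<Longrightarrow> smooth1 (\<lambda>t. f t + g t)"
  by (simp add: smooth1_iff_ktimes_differentiable ktimes_differentiable_add)

lemma smooth1_mult: "smooth1 f \<Longrightarrow> smooth1 g \<Longrightarrow> smooth1 (\<lambda>t. f t * g t)"
  by (simp add: smooth1_iff_ktimes_differentiable ktimes_differentiable_mult)

lemma smooth1_exp: "smooth1 g \<Longrightarrow> smooth1 (\<lambda>t. exp (g t))"
  by (simp add: smooth1_iff_ktimes_differentiable ktimes_differentiable_exp)

lemma smooth1_antiderivative:
  assumes "\<forall>t. (G has_vector_derivative g t) (at t)" and "smooth1 g"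
  shows "smooth1 G"
  unfolding smooth1_iff_ktimes_differentiable
proof
  fix k show "ktimes_differentiable k G"
    using assms by (cases k) (auto simp: smooth1_iff_ktimes_differentiable)
qed

lemma smooth1_has_vector_derivative:
  "smooth1 g \<Longrightarrow> (g has_vector_derivative vector_derivative g (at t)) (at t)"
  using ktimes_differentiable_SucE(1)[of 0 g] by (simp add: smooth1_iff_ktimes_differentiable)

lemma smooth1_continuous_on: "smooth1 g \<Longrightarrow> continuous_on S g"
  using smooth1_has_vector_derivative
  by (metis continuous_at_imp_continuous_on has_vector_derivative_continuous)

lemma exists_antiderivative:
  fixes g :: "real \<Rightarrow> 'a::euclidean_space"
  assumes "continuous_on UNIV g"
  obtains G where "G 0 = 0" "\<forall>t. (G has_vector_derivative g t) (at t)"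
proof -
  obtain G0 where "\<forall>t::real. (G0 has_vector_derivative g t) (at t)"
    using einterval_antiderivative[of "-\<infinity>" "\<infinity>" g] assms
    by (auto simp: continuous_on_eq_continuous_at)
  then show ?thesis
    by (intro that[of "\<lambda>t. G0 t - G0 0"]) (auto intro!: derivative_eq_intros)
qed

section \<open>Periodic solutions of a first order linear equation\<close>

lemma linear_ode_variation_of_constants:
  fixes a A F J :: "real \<Rightarrow> complex" and w0 :: complex
  assumes A: "\<forall>t. (A has_vector_derivative a t) (at t)"
    and J: "\<forall>t. (J has_vector_derivative exp (A t) * F t) (at t)"
  defines "w \<equiv> \<lambda>t. exp (- A t) * (w0 + J t)"
  shows "(w has_vector_derivative F t - a t * w t) (at t)"
proof -
  have "((\<lambda>t. - A t) has_vector_derivative - a t) (at t)"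
    using A by (auto intro!: derivative_eq_intros)
  from has_vector_derivative_exp_compose[OF this]
  have "(w has_vector_derivative exp (- A t) * (exp (A t) * F t) + (- a t * exp (- A t)) * (w0 + J t)) (at t)"
    unfolding w_def using J by (auto intro!: derivative_eq_intros)
  moreover have "exp (- A t) * (exp (A t) * F t) + (- a t * exp (- A t)) * (w0 + J t) = F t - a t * w t"
    by (simp add: w_def exp_minus field_simps)
  ultimately show ?thesis by simp
qed

text \<open>The difference \<open>w (t + 2 * pi) - w t\<close> solves the homogeneous equation, so it vanishes
  everywhere once it vanishes at \<open>0\<close>.\<close>
lemma linear_ode_periodic_if_endpoints_agree:
  fixes a A F w :: "real \<Rightarrow> complex"
  assumes "periodic2pi a" "periodic2pi F"
    and A: "\<forall>t. (A has_vector_derivative a t) (at t)"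
    and w: "\<forall>t. (w has_vector_derivative F t - a t * w t) (at t)"
    and w_2pi: "w (2 * pi) = w 0"
  shows "periodic2pi w"
proof -
  define z where "z t = exp (A t) * (w (t + 2 * pi) - w t)" for t
  have "(z has_vector_derivative 0) (at t)" for t
  proof -
    have "((\<lambda>t. w (t + 2 * pi)) has_vector_derivative F t - a t * w (t + 2 * pi)) (at t)"
    proof -
      have "((\<lambda>t. t + 2 * pi) has_vector_derivative 1) (at t)"
        by (auto intro!: derivative_eq_intros)
      from vector_diff_chain_at[OF this w[rule_format, of "t + 2 * pi"]]
      show ?thesis using assms(1,2) by (simp add: o_def periodic2pi_def)
    qed
    then have "(z has_vector_derivative exp (A t) * ((F t - a t * w (t + 2 * pi)) - (F t - a t * w t))
            + a t * exp (A t) * (w (t + 2 * pi) - w t)) (at t)"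
      unfolding z_def using has_vector_derivative_exp_compose A w
      by (auto intro!: derivative_eq_intros)
    then show ?thesis by (simp add: algebra_simps)
  qed
  then obtain z0 where "\<And>t. z t = z0"
    using has_vector_derivative_zero_constant[of UNIV z] by auto
  then have "z t = 0" for t
    using w_2pi by (metis add_0 cancel_comm_monoid_add_class.diff_cancel mult_zero_right z_def)
  then show ?thesis unfolding periodic2pi_def z_def by simp
qed

lemma periodic_linear_ode_solvable:
  fixes a A F :: "real \<Rightarrow> complex"
  assumes "smooth1 a" "smooth1 F" "periodic2pi a" "periodic2pi F"
    and A: "\<forall>t. (A has_vector_derivative a t) (at t)" and A0: "A 0 = 0"
    and resonance: "exp (A (2 * pi)) = 1 \<Longrightarrow> integral {0..2 * pi} (\<lambda>t. exp (A t) * F t) = 0"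
  shows "\<exists>w. periodic2pi w \<and> smooth1 w \<and> (\<forall>t. vector_derivative w (at t) + a t * w t = F t)"
proof -
  have "smooth1 A" using smooth1_antiderivative A assms(1) by blast
  then have "smooth1 (\<lambda>t. exp (A t) * F t)" by (simp add: smooth1_exp smooth1_mult assms(2))
  then obtain J where J0: "J 0 = 0" and J: "\<forall>t. (J has_vector_derivative exp (A t) * F t) (at t)"
    using exists_antiderivative smooth1_continuous_on by blast
  have "((\<lambda>t. exp (A t) * F t) has_integral J (2 * pi) - J 0) {0..2 * pi}"
    by (rule fundamental_theorem_of_calculus) (use J in \<open>auto intro: has_vector_derivative_at_within\<close>)
  then have J_2pi: "J (2 * pi) = integral {0..2 * pi} (\<lambda>t. exp (A t) * F t)"
    using J0 by (simp add: integral_unique)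
  obtain w0 where w0: "w0 + J (2 * pi) = exp (A (2 * pi)) * w0"
  proof (cases "exp (A (2 * pi)) = 1")
    case True
    then show ?thesis using that[of 0] resonance J_2pi by simp
  next
    case False
    then show ?thesis using that[of "J (2 * pi) / (exp (A (2 * pi)) - 1)"] by (simp add: field_simps)
  qed
  define w where "w t = exp (- A t) * (w0 + J t)" for t
  have w': "\<forall>t. (w has_vector_derivative F t - a t * w t) (at t)"
    using linear_ode_variation_of_constants[OF A J] by (simp add: w_def[abs_def])
  have "w (2 * pi) = w 0"
    using w0 by (simp add: w_def J0 A0 exp_minus field_simps)
  then have "periodic2pi w"
    using linear_ode_periodic_if_endpoints_agree[OF assms(3,4) A w'] by blast
  moreover have "smooth1 w"
  proof -
    have "smooth1 (\<lambda>t. - A t)" using smooth1_mult[OF smooth1_const[of "-1"] \<open>smooth1 A\<close>] by simp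
    then show ?thesis
      unfolding w_def[abs_def] using J \<open>smooth1 (\<lambda>t. exp (A t) * F t)\<close>
      by (intro smooth1_mult smooth1_exp smooth1_add smooth1_const smooth1_antiderivative[of J])
  qed
  moreover have "\<forall>t. vector_derivative w (at t) + a t * w t = F t"
    using vector_derivative_at w' by (metis diff_add_cancel)
  ultimately show ?thesis by blast
qed

section \<open>Integrals over the real line\<close>

lemma integral_inverse_1_plus_square_lborel:
  "integrable lborel (\<lambda>x::real. inverse (1 + x^2))"
  "(LINT x|lborel. inverse (1 + x^2)) = pi"
  using integrable_inverse_1_plus_square LBINT_inverse_1_plus_square
  by (simp_all add: set_integrable_def interval_lebesgue_integral_def set_lebesgue_integral_def)

lemma integrable_if_inverse_square_bound:
  fixes h :: "real \<Rightarrow> 'a::{banach, second_countable_topology}"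
  assumes "continuous_on UNIV h" and bound: "\<forall>x. norm (h x) \<le> B / (1 + x^2)"
  shows "integrable lborel h"
proof (rule Bochner_Integration.integrable_bound)
  show "integrable lborel (\<lambda>x. B * inverse (1 + x^2))"
    using integral_inverse_1_plus_square_lborel by simp
  show "h \<in> borel_measurable lborel"
    using borel_measurable_continuous_onI[OF assms(1)] by simp
  have "norm (h 0) \<le> B" using bound[rule_format, of 0] by simp
  then have "0 \<le> B" by (meson norm_ge_zero order_trans)
  then show "AE x in lborel. norm (h x) \<le> norm (B * inverse (1 + x^2))"
    using bound by (auto simp: divide_inverse abs_mult)
qed

lemma norm_integral_le_inverse_square_bound:
  fixes h :: "real \<Rightarrow> 'a::{banach, second_countable_topology}"
  assumes "continuous_on UNIV h" and "\<forall>x. norm (h x) \<le> B / (1 + x^2)"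
  shows "norm (integral\<^sup>L lborel h) \<le> B * pi"
proof -
  have "norm (integral\<^sup>L lborel h) \<le> (LINT x|lborel. B * inverse (1 + x^2))"
    by (rule Bochner_Integration.integral_norm_bound_integral)
      (use integrable_if_inverse_square_bound[OF assms] integral_inverse_1_plus_square_lborel assms(2)
        in \<open>auto simp: divide_inverse\<close>)
  then show ?thesis using integral_inverse_1_plus_square_lborel by simp
qed

lemma le_inverse_square_bound_if_moments:
  fixes x :: real
  assumes "norm z \<le> C0" and "x^2 * norm z \<le> C2"
  shows "norm z \<le> (C0 + C2) / (1 + x^2)"
proof -
  have "norm z * (1 + x^2) \<le> C0 + C2" using assms by (simp add: algebra_simps)
  then show ?thesis by (simp add: pos_le_divide_eq add_pos_nonneg)
qed

lemma taylor_remainder_le: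
  fixes f :: "real \<Rightarrow> 'a::real_normed_vector"
  assumes f': "\<forall>s. (f has_vector_derivative f' s) (at s)"
    and f'': "\<forall>s. (f' has_vector_derivative f'' s) (at s)"
    and M: "\<forall>s. norm (f'' s) \<le> M"
  shows "norm (f y - f t - (y - t) *\<^sub>R f' t) \<le> M * (y - t)^2"
proof -
  have f'_lipschitz: "norm (f' u - f' t) \<le> M * norm (u - t)" for u
    by (rule differentiable_bound[of UNIV])
      (use f'' M in \<open>auto simp: has_vector_derivative_def onorm_scaleR_left bounded_linear_ident onorm_id\<close>)
  have "norm (f y - f t - (y - t) *\<^sub>R f' t) \<le> norm (y - t) * (M * \<bar>y - t\<bar>)"
  proof (rule vector_differentiable_bound_linearization[of "closed_segment t y"])
    fix u assume "u \<in> closed_segment t y"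
    then have "\<bar>u - t\<bar> \<le> \<bar>y - t\<bar>"
      by (auto simp: closed_segment_eq_real_ivl split: if_splits)
    moreover have "0 \<le> M" using M[rule_format, of t] by (meson norm_ge_zero order_trans)
    ultimately show "norm (f' u - f' t) \<le> M * \<bar>y - t\<bar>"
      using f'_lipschitz[of u] by (simp add: order_trans mult_left_mono)
  qed (use f' has_vector_derivative_at_within in blast)+
  also have "norm (y - t) * (M * \<bar>y - t\<bar>) = M * (y - t)^2"
    by (metis abs_mult_self_eq mult.left_commute power2_eq_square real_norm_def)
  finally show ?thesis .
qed

lemma has_vector_derivative_if_remainder_quadratic:
  fixes F :: "real \<Rightarrow> 'a::real_normed_vector"
  assumes remainder: "\<forall>y. norm (F y - F t - (y - t) *\<^sub>R F') \<le> C * (y - t)^2"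
  shows "(F has_vector_derivative F') (at t)"
  unfolding has_vector_derivative_def has_derivative_iff_norm
proof (intro conjI bounded_linear_scaleR_left)
  have bound: "\<forall>y. norm (norm (F y - F t - (y - t) *\<^sub>R F') / norm (y - t)) \<le> C * \<bar>y - t\<bar>"
  proof
    fix y
    show "norm (norm (F y - F t - (y - t) *\<^sub>R F') / norm (y - t)) \<le> C * \<bar>y - t\<bar>"
    proof (cases "y = t")
      case False
      have "norm (F y - F t - (y - t) *\<^sub>R F') \<le> C * \<bar>y - t\<bar> * \<bar>y - t\<bar>"
        using remainder by (simp add: power2_eq_square mult.assoc)
      then show ?thesis using False by (simp add: pos_divide_le_eq)
    qed simp
  qed
  have "((\<lambda>y. C * \<bar>y - t\<bar>) \<longlongrightarrow> C * \<bar>t - t\<bar>) (at t)"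
    by (intro tendsto_intros)
  then have "((\<lambda>y. C * \<bar>y - t\<bar>) \<longlongrightarrow> 0) (at t)" by simp
  from Lim_null_comparison[OF always_eventually[OF bound] this]
  show "((\<lambda>y. norm (F y - F t - (y - t) *\<^sub>R F') / norm (y - t)) \<longlongrightarrow> 0) (at t)" .
qed

lemma has_vector_derivative_integral_lborel:
  fixes k k' k'' :: "real \<Rightarrow> real \<Rightarrow> 'a::{banach, second_countable_topology}"
  assumes "\<forall>s x. ((\<lambda>s. k s x) has_vector_derivative k' s x) (at s)"
    and "\<forall>s x. ((\<lambda>s. k' s x) has_vector_derivative k'' s x) (at s)"
    and "\<forall>s. integrable lborel (k s)" and "\<forall>s. integrable lborel (k' s)"
    and "\<forall>s x. norm (k'' s x) \<le> B / (1 + x^2)"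
  shows "((\<lambda>s. integral\<^sup>L lborel (k s)) has_vector_derivative integral\<^sup>L lborel (k' t)) (at t)"
proof (rule has_vector_derivative_if_remainder_quadratic, intro allI)
  fix y
  have "norm (k y x - k t x - (y - t) *\<^sub>R k' t x) \<le> B / (1 + x^2) * (y - t)^2" for x
    by (rule taylor_remainder_le) (use assms in auto)
  then have "norm (LINT x|lborel. k y x - k t x - (y - t) *\<^sub>R k' t x)
      \<le> (LINT x|lborel. (B * (y - t)^2) * inverse (1 + x^2))"
    by (intro Bochner_Integration.integral_norm_bound_integral)
      (use assms integral_inverse_1_plus_square_lborel in \<open>auto simp: divide_inverse ac_simps\<close>)
  then show "norm (integral\<^sup>L lborel (k y) - integral\<^sup>L lborel (k t) - (y - t) *\<^sub>R integral\<^sup>L lborel (k' t))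
      \<le> B * pi * (y - t)^2"
    using assms(3,4) integral_inverse_1_plus_square_lborel by (simp add: ac_simps)
qed

lemma integral_lborel_derivative_eq_0:
  fixes h h' :: "real \<Rightarrow> 'a::euclidean_space"
  assumes "\<forall>x. (h has_vector_derivative h' x) (at x)" and "continuous_on UNIV h'"
    and "integrable lborel h'"
    and "(h \<longlongrightarrow> 0) at_top" and "(h \<longlongrightarrow> 0) at_bot"
  shows "integral\<^sup>L lborel h' = 0"
proof -
  have "(LBINT x=-\<infinity>..\<infinity>. h' x) = 0 - 0"
    by (rule interval_integral_FTC_integrable[where F=h])
      (use assms in \<open>auto simp: ereal_tendsto_simps set_integrable_def continuous_on_eq_continuous_at\<close>)
  then show ?thesis by (simp add: interval_lebesgue_integral_def set_lebesgue_integral_def)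
qed

section \<open>The partial Fourier transform\<close>

lemma has_vector_derivative_cis_linear:
  "((\<lambda>x. cis (- (x * \<xi>))) has_vector_derivative - \<i> * \<xi> * cis (- (x * \<xi>))) (at x)"
proof -
  have "((\<lambda>x. - (x * \<xi>)) has_derivative (\<lambda>h. - (h * \<xi>))) (at x)"
    by (auto intro!: derivative_eq_intros)
  from has_derivative_cis[OF this] show ?thesis
    unfolding has_vector_derivative_def by (simp add: fun_eq_iff scaleR_conv_of_real algebra_simps)
qed

definition decaying_derivs2 :: "(nat \<Rightarrow> nat \<Rightarrow> real \<Rightarrow> real \<Rightarrow> complex) \<Rightarrow> bool" where
  "decaying_derivs2 D \<longleftrightarrow>
     (\<forall>a b t x. ((\<lambda>s. D a b s x) has_vector_derivative D (Suc a) b t x) (at t) \<and>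
                ((\<lambda>y. D a b t y) has_vector_derivative D a (Suc b) t x) (at x)) \<and>
     (\<forall>a b. \<exists>B. \<forall>t x. norm (D a b t x) \<le> B / (1 + x^2))"

lemma in_schwartz_decaying_derivs2:
  assumes "in_schwartz f"
  obtains D where "smooth_derivs2 f D" "decaying_derivs2 D"
proof -
  obtain D where D: "smooth_derivs2 f D" and moments: "\<forall>a b g. \<exists>C. \<forall>t x. \<bar>x\<bar> ^ g * norm (D a b t x) \<le> C"
    using assms unfolding in_schwartz_def by blast
  have "\<exists>B. \<forall>t x. norm (D a b t x) \<le> B / (1 + x^2)" for a b
  proof -
    obtain C0 C2 where C: "\<forall>t x. \<bar>x\<bar> ^ 0 * norm (D a b t x) \<le> C0" "\<forall>t x. \<bar>x\<bar> ^ 2 * norm (D a b t x) \<le> C2"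
      using moments by meson
    have "norm (D a b t x) \<le> (C0 + C2) / (1 + x^2)" for t x
      by (rule le_inverse_square_bound_if_moments) (use C in \<open>simp_all add: power2_abs\<close>)
    then show ?thesis by blast
  qed
  with D show ?thesis
    by (intro that[of D]) (auto simp: decaying_derivs2_def smooth_derivs2_def)
qed

context
  fixes D :: "nat \<Rightarrow> nat \<Rightarrow> real \<Rightarrow> real \<Rightarrow> complex" and \<xi> :: real
  assumes D: "decaying_derivs2 D"
begin

lemma decaying_derivs2_has_vector_derivative:
  "((\<lambda>s. D a b s x) has_vector_derivative D (Suc a) b t x) (at t)"
  "((\<lambda>y. D a b t y) has_vector_derivative D a (Suc b) t x) (at x)"
  using D by (simp_all add: decaying_derivs2_def)

lemma decaying_derivs2_fourier_bound:
  obtains B where "\<forall>t x. norm (D a b t x * cis (- (x * \<xi>))) \<le> B / (1 + x^2)"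
proof -
  obtain B where "\<forall>t x. norm (D a b t x) \<le> B / (1 + x^2)"
    using D unfolding decaying_derivs2_def by blast
  then show thesis by (intro that[of B]) (simp add: norm_mult)
qed

lemma decaying_derivs2_continuous_on: "continuous_on UNIV (D a b t)"
  using decaying_derivs2_has_vector_derivative(2) continuous_on_vector_derivative by blast

lemma decaying_derivs2_fourier_continuous:
  "continuous_on UNIV (\<lambda>x. D a b t x * cis (- (x * \<xi>)))"
  using decaying_derivs2_continuous_on by (intro continuous_intros) auto

lemma decaying_derivs2_fourier_integrable:
  "integrable lborel (\<lambda>x. D a b t x * cis (- (x * \<xi>)))"
proof -
  obtain B where "\<forall>t x. norm (D a b t x * cis (- (x * \<xi>))) \<le> B / (1 + x^2)"
    using decaying_derivs2_fourier_bound by blast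
  then show ?thesis
    by (intro integrable_if_inverse_square_bound[OF decaying_derivs2_fourier_continuous, of _ _ _ B]) blast
qed

lemma fhat_has_vector_derivative:
  "((\<lambda>t. fhat (D a b) t \<xi>) has_vector_derivative fhat (D (Suc a) b) t \<xi>) (at t)"
proof -
  obtain B where B: "\<forall>t x. norm (D (Suc (Suc a)) b t x * cis (- (x * \<xi>))) \<le> B / (1 + x^2)"
    using decaying_derivs2_fourier_bound by blast
  show ?thesis unfolding fhat_def
    by (rule has_vector_derivative_integral_lborel[OF _ _ _ _ B])
      (intro allI has_vector_derivative_mult_left decaying_derivs2_has_vector_derivative
        decaying_derivs2_fourier_integrable)+
qed

lemma fhat_continuous_on: "continuous_on S (\<lambda>t. fhat (D a b) t \<xi>)"
  by (intro continuous_at_imp_continuous_on ballI has_vector_derivative_continuous)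
    (rule fhat_has_vector_derivative)

text \<open>Integration by parts in \<open>x\<close>; the boundary terms vanish by the decay of \<open>D a b t\<close>.\<close>
lemma fhat_x_derivative: "fhat (D a (Suc b)) t \<xi> = \<i> * \<xi> * fhat (D a b) t \<xi>"
proof -
  define h where "h x = D a b t x * cis (- (x * \<xi>))" for x
  define h' where "h' x = D a (Suc b) t x * cis (- (x * \<xi>)) - \<i> * \<xi> * h x" for x
  have "\<forall>x. (h has_vector_derivative h' x) (at x)"
  proof
    fix x
    have "(h has_vector_derivative
        D a b t x * (- \<i> * \<xi> * cis (- (x * \<xi>))) + D a (Suc b) t x * cis (- (x * \<xi>))) (at x)"
      unfolding h_def
      by (rule has_vector_derivative_mult[OF decaying_derivs2_has_vector_derivative(2)
            has_vector_derivative_cis_linear])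
    then show "(h has_vector_derivative h' x) (at x)"
      by (simp add: h'_def h_def algebra_simps)
  qed
  moreover have "continuous_on UNIV h'"
    unfolding h'_def h_def
    by (intro continuous_intros decaying_derivs2_fourier_continuous)
  moreover have "integrable lborel h'"
    unfolding h'_def h_def
    by (intro Bochner_Integration.integrable_diff Bochner_Integration.integrable_mult_right
        decaying_derivs2_fourier_integrable)
  moreover have "(h \<longlongrightarrow> 0) at_top" "(h \<longlongrightarrow> 0) at_bot"
  proof -
    obtain B where "\<forall>t x. norm (D a b t x * cis (- (x * \<xi>))) \<le> B / (1 + x^2)"
      using decaying_derivs2_fourier_bound by blast
    then have B: "\<forall>x. norm (h x) \<le> B * inverse (1 + x^2)"
      by (simp add: h_def divide_inverse)
    have decay: "((\<lambda>x. inverse (1 + x^2)) \<longlongrightarrow> (0::real)) at_top"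
      "((\<lambda>x. inverse (1 + x^2)) \<longlongrightarrow> (0::real)) at_bot"
      by real_asymp+
    show "(h \<longlongrightarrow> 0) at_top" "(h \<longlongrightarrow> 0) at_bot"
      using Lim_null_comparison[OF always_eventually[OF B] tendsto_mult_right_zero] decay by blast+
  qed
  ultimately have "integral\<^sup>L lborel h' = 0"
    by (rule integral_lborel_derivative_eq_0)
  moreover have "integral\<^sup>L lborel h' = fhat (D a (Suc b)) t \<xi> - \<i> * \<xi> * fhat (D a b) t \<xi>"
    unfolding h'_def h_def fhat_def by (simp add: decaying_derivs2_fourier_integrable)
  ultimately show ?thesis by simp
qed

end

lemma in_schwartz_fourier_integrable:
  assumes "in_schwartz f"
  shows "integrable lborel (\<lambda>x. f t x * cis (- (x * \<xi>)))"
proof -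
  obtain D where "smooth_derivs2 f D" "decaying_derivs2 D"
    using in_schwartz_decaying_derivs2[OF assms] by blast
  then show ?thesis
    using decaying_derivs2_fourier_integrable[of D 0 0 t] by (simp add: smooth_derivs2_def)
qed

lemma fhat_linear:
  assumes "in_schwartz f" "in_schwartz g"
  shows "fhat (\<lambda>t x. a * f t x + g t x) t \<xi> = a * fhat f t \<xi> + fhat g t \<xi>"
  using in_schwartz_fourier_integrable[OF assms(1)] in_schwartz_fourier_integrable[OF assms(2)]
  by (simp add: fhat_def distrib_right mult.assoc)

lemma smooth1_fhat:
  assumes "in_schwartz f"
  shows "smooth1 (\<lambda>t. fhat f t \<xi>)"
proof -
  obtain D where "smooth_derivs2 f D" "decaying_derivs2 D"
    using in_schwartz_decaying_derivs2[OF assms] by blast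
  then show ?thesis
    unfolding smooth1_def
    by (intro exI[of _ "\<lambda>k t. fhat (D k 0) t \<xi>"]) (auto simp: smooth_derivs2_def fhat_has_vector_derivative)
qed

lemma periodic2pi_fhat: "in_schwartz f \<Longrightarrow> periodic2pi (\<lambda>t. fhat f t \<xi>)"
  by (simp add: in_schwartz_def fhat_def periodic2pi_def)

lemma norm_fhat_le_seminorm:
  assumes D: "smooth_derivs2 f D"
    and "\<forall>t x. norm (D 0 0 t x) \<le> M" "\<forall>t x. x^2 * norm (D 0 0 t x) \<le> M"
  shows "norm (fhat f t \<xi>) \<le> 2 * pi * M"
proof -
  have "((\<lambda>y. D 0 0 t y) has_vector_derivative D 0 (Suc 0) t x) (at x)" for x
    using D unfolding smooth_derivs2_def by blast
  then have "continuous_on UNIV (D 0 0 t)"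
    using continuous_on_vector_derivative by blast
  moreover have "\<forall>x. norm (D 0 0 t x * cis (- (x * \<xi>))) \<le> (M + M) / (1 + x^2)"
  proof
    fix x
    show "norm (D 0 0 t x * cis (- (x * \<xi>))) \<le> (M + M) / (1 + x^2)"
      using le_inverse_square_bound_if_moments[of "D 0 0 t x" M x M] assms(2,3)
      by (simp add: norm_mult)
  qed
  ultimately have "norm (LINT x|lborel. D 0 0 t x * cis (- (x * \<xi>))) \<le> (M + M) * pi"
    by (intro norm_integral_le_inverse_square_bound) (auto intro!: continuous_intros)
  then show ?thesis
    using D by (simp add: fhat_def smooth_derivs2_def ac_simps)
qed

lemma fhat_Lop:
  assumes "smooth_derivs2 \<phi> D" "decaying_derivs2 D"
  shows "fhat (Lop c q \<phi>) t \<xi> = fhat (D 1 0) t \<xi> + (\<i> * \<xi> * c t + q) * fhat \<phi> t \<xi>"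
proof -
  have \<phi>: "\<phi> = D 0 0" using assms(1) by (simp add: smooth_derivs2_def)
  have "Lop c q \<phi> = (\<lambda>t x. D 1 0 t x + c t * D 0 1 t x + q * D 0 0 t x)"
    unfolding Lop_def \<phi>
    using vector_derivative_at[OF decaying_derivs2_has_vector_derivative(1)[OF assms(2)]]
      vector_derivative_at[OF decaying_derivs2_has_vector_derivative(2)[OF assms(2)]]
    by (simp add: fun_eq_iff)
  then have "fhat (Lop c q \<phi>) t \<xi> = fhat (D 1 0) t \<xi> + c t * fhat (D 0 1) t \<xi> + q * fhat (D 0 0) t \<xi>"
    using decaying_derivs2_fourier_integrable[OF assms(2)]
    by (simp add: fhat_def distrib_right mult.assoc)
  also have "\<dots> = fhat (D 1 0) t \<xi> + (\<i> * \<xi> * c t + q) * fhat \<phi> t \<xi>"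
    using fhat_x_derivative[OF assms(2), of 0 0] \<phi> by (simp add: algebra_simps)
  finally show ?thesis .
qed

section \<open>The resonant distribution\<close>

definition fourier_mode_functional ::
  "(real \<Rightarrow> complex) \<Rightarrow> real \<Rightarrow> (real \<Rightarrow> real \<Rightarrow> complex) \<Rightarrow> complex" where
  "fourier_mode_functional A \<xi> \<phi> = integral {0..2 * pi} (\<lambda>t. exp (A t) * fhat \<phi> t \<xi>)"

lemma continuous_on_fourier_mode_integrand:
  assumes "continuous_on UNIV A" "in_schwartz f"
  shows "continuous_on {0..2 * pi} (\<lambda>t. exp (A t) * fhat f t \<xi>)"
proof -
  obtain D where D: "smooth_derivs2 f D" "decaying_derivs2 D"
    using in_schwartz_decaying_derivs2[OF assms(2)] by blast
  then have "fhat f = fhat (D 0 0)" by (simp add: smooth_derivs2_def)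
  then have "continuous_on {0..2 * pi} (\<lambda>t. fhat f t \<xi>)"
    using fhat_continuous_on[OF D(2)] by simp
  moreover have "continuous_on {0..2 * pi} A"
    using assms(1) continuous_on_subset by blast
  ultimately show ?thesis by (intro continuous_intros)
qed

lemma tempered_fourier_mode_functional:
  assumes A: "continuous_on UNIV A"
  shows "tempered (fourier_mode_functional A \<xi>)"
  unfolding tempered_def
proof (intro conjI allI impI)
  fix f g and a :: complex
  assume f: "in_schwartz f" and g: "in_schwartz g"
  have integral: "((\<lambda>t. exp (A t) * fhat h t \<xi>) has_integral fourier_mode_functional A \<xi> h) {0..2 * pi}"
    if "in_schwartz h" for h
    unfolding fourier_mode_functional_def
    by (intro integrable_integral integrable_continuous_interval
        continuous_on_fourier_mode_integrand[OF A that])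
  have "((\<lambda>t. a * (exp (A t) * fhat f t \<xi>) + exp (A t) * fhat g t \<xi>) has_integral
      a * fourier_mode_functional A \<xi> f + fourier_mode_functional A \<xi> g) {0..2 * pi}"
    by (intro has_integral_add has_integral_mult_right integral f g)
  then show "fourier_mode_functional A \<xi> (\<lambda>t x. a * f t x + g t x)
      = a * fourier_mode_functional A \<xi> f + fourier_mode_functional A \<xi> g"
    unfolding fourier_mode_functional_def fhat_linear[OF f g]
    by (simp add: integral_unique distrib_left mult.left_commute)
next
  have "compact ((\<lambda>t. exp (A t)) ` {0..2 * pi})"
    using A by (intro compact_continuous_image continuous_intros) (auto intro: continuous_on_subset)
  then obtain E where E: "\<forall>t\<in>{0..2 * pi}. norm (exp (A t)) \<le> E"
    by (meson bounded_iff compact_imp_bounded imageI)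
  have "norm (exp (A 0)) \<le> E" using E by simp
  then have E_nonneg: "0 \<le> E" using norm_ge_zero order_trans by blast
  show "\<exists>C N. \<forall>f D M. in_schwartz f \<longrightarrow> smooth_derivs2 f D \<longrightarrow>
      (\<forall>a\<le>N. \<forall>b\<le>N. \<forall>g\<le>N. \<forall>t x. \<bar>x\<bar> ^ g * norm (D a b t x) \<le> M) \<longrightarrow>
      norm (fourier_mode_functional A \<xi> f) \<le> C * M"
  proof (intro exI[of _ "E * 2 * pi * 2 * pi"] exI[of _ "2::nat"] allI impI)
    fix f D M
    assume f: "in_schwartz f" and D: "smooth_derivs2 f D"
      and seminorms: "\<forall>a\<le>2::nat. \<forall>b\<le>2::nat. \<forall>g\<le>2::nat. \<forall>t x. \<bar>x\<bar> ^ g * norm (D a b t x) \<le> M"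
    have "\<forall>t x. norm (D 0 0 t x) \<le> M" "\<forall>t x. x^2 * norm (D 0 0 t x) \<le> M"
      using seminorms[rule_format, of 0 0 0] seminorms[rule_format, of 0 0 2] by (simp_all add: power2_abs)
    then have "norm (fhat f t \<xi>) \<le> 2 * pi * M" for t
      using norm_fhat_le_seminorm[OF D] by blast
    then have "norm (exp (A t) * fhat f t \<xi>) \<le> E * (2 * pi * M)" if "t \<in> {0..2 * pi}" for t
      unfolding norm_mult using E E_nonneg that by (intro mult_mono) auto
    then have "norm (fourier_mode_functional A \<xi> f) \<le> E * (2 * pi * M) * (2 * pi - 0)"
      unfolding fourier_mode_functional_def
      by (intro integral_bound continuous_on_fourier_mode_integrand[OF A f]) auto
    then show "norm (fourier_mode_functional A \<xi> f) \<le> E * 2 * pi * 2 * pi * M"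
      by (simp add: ac_simps)
  qed
qed

text \<open>Since \<open>A' = i \<xi> c + q\<close>, the integrand is the derivative of \<open>exp A * fhat \<phi>\<close>, whose values
  at \<open>0\<close> and \<open>2 * pi\<close> agree.\<close>
lemma fourier_mode_functional_Lop_eq_0:
  assumes A: "\<forall>t. (A has_vector_derivative \<i> * \<xi> * c t + q) (at t)"
    and exp_A: "exp (A (2 * pi)) = exp (A 0)" and \<phi>: "in_schwartz \<phi>"
  shows "fourier_mode_functional A \<xi> (Lop c q \<phi>) = 0"
proof -
  obtain D where D: "smooth_derivs2 \<phi> D" "decaying_derivs2 D"
    using in_schwartz_decaying_derivs2[OF \<phi>] by blast
  have fhat_\<phi>: "fhat \<phi> = fhat (D 0 0)" using D(1) by (simp add: smooth_derivs2_def)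
  have "((\<lambda>t. exp (A t) * fhat \<phi> t \<xi>) has_vector_derivative exp (A t) * fhat (Lop c q \<phi>) t \<xi>) (at t)"
    for t
  proof -
    have "((\<lambda>t. exp (A t) * fhat \<phi> t \<xi>) has_vector_derivative
        exp (A t) * fhat (D 1 0) t \<xi> + (\<i> * \<xi> * c t + q) * exp (A t) * fhat \<phi> t \<xi>) (at t)"
      unfolding fhat_\<phi>
      using has_vector_derivative_mult[OF has_vector_derivative_exp_compose[OF A[rule_format]]
          fhat_has_vector_derivative[OF D(2)]]
      by simp
    then show ?thesis by (simp add: fhat_Lop[OF D] algebra_simps)
  qed
  then have "((\<lambda>t. exp (A t) * fhat (Lop c q \<phi>) t \<xi>) has_integral
      exp (A (2 * pi)) * fhat \<phi> (2 * pi) \<xi> - exp (A 0) * fhat \<phi> 0 \<xi>) {0..2 * pi}"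
    by (intro fundamental_theorem_of_calculus) (auto intro: has_vector_derivative_at_within)
  moreover have "fhat \<phi> (2 * pi) \<xi> = fhat \<phi> 0 \<xi>"
    using periodic2pi_fhat[OF \<phi>] unfolding periodic2pi_def by (metis add_0)
  ultimately show ?thesis
    using exp_A by (simp add: fourier_mode_functional_def integral_unique)
qed

lemma fourier_mode_functional_eq_0_if_ann_ker_Lt:
  assumes f: "f \<in> ann_ker_Lt c q"
    and A: "\<forall>t. (A has_vector_derivative \<i> * \<xi> * c t + q) (at t)"
    and exp_A: "exp (A (2 * pi)) = exp (A 0)"
  shows "fourier_mode_functional A \<xi> f = 0"
proof -
  have "continuous_on UNIV A"
    using A by (meson continuous_at_imp_continuous_on has_vector_derivative_continuous)
  then have "tempered (fourier_mode_functional A \<xi>)"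
    by (rule tempered_fourier_mode_functional)
  moreover have "\<forall>\<phi>. in_schwartz \<phi> \<longrightarrow> fourier_mode_functional A \<xi> (Lop c q \<phi>) = 0"
    using fourier_mode_functional_Lop_eq_0[OF A exp_A] by blast
  ultimately show ?thesis
    using f unfolding ann_ker_Lt_def by blast
qed

theorem lemma5p2:
  fixes c :: "real \<Rightarrow> complex" and q :: complex and f :: "real \<Rightarrow> real \<Rightarrow> complex"
  assumes "smooth1 c" and "periodic2pi c"
    and "f \<in> ann_ker_Lt c q"
  shows "\<forall>\<xi>::real. \<exists>w :: real \<Rightarrow> complex. periodic2pi w \<and> smooth1 w \<and>
           (\<forall>t. vector_derivative w (at t)
                 + \<i> * (of_real \<xi> * c t - \<i> * q) * w t = fhat f t \<xi>)"
proof
  fix \<xi> :: real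
  let ?a = "\<lambda>t. \<i> * (of_real \<xi> * c t - \<i> * q)"
  have a_eq: "?a t = \<i> * \<xi> * c t + q" for t
    by (simp add: algebra_simps)
  have a: "smooth1 ?a" "periodic2pi ?a"
    using assms(1,2) unfolding a_eq by (auto intro!: smooth1_add smooth1_mult smooth1_const simp: periodic2pi_def)
  have f: "in_schwartz f"
    using assms(3) by (simp add: ann_ker_Lt_def)
  obtain A where A0: "A 0 = 0" and A: "\<forall>t. (A has_vector_derivative ?a t) (at t)"
    using exists_antiderivative smooth1_continuous_on a(1) by blast
  have "integral {0..2 * pi} (\<lambda>t. exp (A t) * fhat f t \<xi>) = 0" if "exp (A (2 * pi)) = 1"
    using fourier_mode_functional_eq_0_if_ann_ker_Lt[OF assms(3), of A \<xi>] A A0 that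
    by (simp add: a_eq fourier_mode_functional_def)
  then show "\<exists>w. periodic2pi w \<and> smooth1 w \<and> (\<forall>t. vector_derivative w (at t) + ?a t * w t = fhat f t \<xi>)"
    by (rule periodic_linear_ode_solvable[OF a(1) smooth1_fhat[OF f] a(2) periodic2pi_fhat[OF f] A A0])
qed

end
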